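(* Let $X_\ell, X_{\ell-1}$ be random vectors in $\mathbb{R}^m$ with $\|X_\ell\|_2 = \|X_{\ell-1}\|_2 = 1$ almost surely, and let $Z$ be a square-integrable random vector in $\mathbb{R}^d$, all on a common probability space. Let $\rho(x,y) = 1 - \frac{\langle x, y\rangle}{\|x\|\|y\|}$ be the cosine distance, and let $\epsilon>0$ with $\mathbb{E}[\rho(X_\ell, X_{\ell-1})] < \frac{\epsilon}{2}$. Assume that the function $$h(x,y) = \mathbb{E}[Z \mid X_\ell = x, X_{\ell-1} = y]$$ is $\alpha$-Lipschitz in its first argument and $\beta$-Lipschitz in its second argument (with respect to Euclidean norms). Then $$\mathbb{E}\big[\|\mathbb{E}[Z\mid X_\ell] - \mathbb{E}[Z\mid X_{\ell-1}]\|_2^2\big] < 2(\alpha^2+\beta^2)\epsilon.$$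
   Context: Here $X_\ell, X_{\ell-1}$ model (normalized) hidden representations of two adjacent layers of a network and $Z$ a task variable. The conditional expectations $\mathbb{E}[Z\mid X_\ell]$, $\mathbb{E}[Z\mid X_{\ell-1}]$ are the usual (minimum mean-squared-error) conditional expectations. *)

theory Defs
  imports "HOL-Analysis.Analysis" "HOL-Probability.Probability"
begin

definition cos_dist :: "real^'m \<Rightarrow> real^'m \<Rightarrow> real" where
  "cos_dist x y = 1 - inner x y / (norm x * norm y)"

definition cond_exp_vec ::
  "'a measure \<Rightarrow> ('a \<Rightarrow> 'b::topological_space) \<Rightarrow> ('a \<Rightarrow> real^'d) \<Rightarrow> 'a \<Rightarrow> real^'d" where
  "cond_exp_vec M X Z = (\<lambda>\<omega>. \<chi> i. real_cond_exp M (vimage_algebra (space M) X borel) (\<lambda>\<omega>'. Z \<omega>' $ i) \<omega>)"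

end

theory Submission imports Defs begin

text \<open>Let \<open>Y = h(X\<^sub>\<ell>, X\<^sub>\<ell>\<^sub>-\<^sub>1)\<close>, which is \<open>E[Z | X\<^sub>\<ell>, X\<^sub>\<ell>\<^sub>-\<^sub>1]\<close>. By the tower property
  \<open>E[Z | X\<^sub>\<ell>] = E[Y | X\<^sub>\<ell>]\<close>, and \<open>E[Y | X\<^sub>\<ell>]\<close> is the best \<open>L\<^sup>2\<close> approximation of \<open>Y\<close> by
  \<open>X\<^sub>\<ell>\<close>-measurable functions; comparing it with \<open>h(X\<^sub>\<ell>, X\<^sub>\<ell>)\<close> gives
  \<open>E\<parallel>E[Z | X\<^sub>\<ell>] - Y\<parallel>\<^sup>2 \<le> \<beta>\<^sup>2 E\<parallel>X\<^sub>\<ell> - X\<^sub>\<ell>\<^sub>-\<^sub>1\<parallel>\<^sup>2\<close>, and symmetrically with \<open>h(X\<^sub>\<ell>\<^sub>-\<^sub>1, X\<^sub>\<ell>\<^sub>-\<^sub>1)\<close> and \<open>\<alpha>\<close>.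
  Since \<open>\<parallel>a - b\<parallel>\<^sup>2 \<le> 2\<parallel>a - y\<parallel>\<^sup>2 + 2\<parallel>b - y\<parallel>\<^sup>2\<close> and \<open>\<parallel>x - y\<parallel>\<^sup>2 = 2\<rho>(x, y)\<close> for unit vectors,
  the left-hand side is at most \<open>2(\<alpha>\<^sup>2 + \<beta>\<^sup>2) E\<parallel>X\<^sub>\<ell> - X\<^sub>\<ell>\<^sub>-\<^sub>1\<parallel>\<^sup>2 = 4(\<alpha>\<^sup>2 + \<beta>\<^sup>2) E\<rho> < 2(\<alpha>\<^sup>2 + \<beta>\<^sup>2)\<epsilon>\<close>.\<close>

lemma integrable_mult_of_square_integrable:
  fixes f g :: "'a \<Rightarrow> real"
  assumes [measurable]: "f \<in> borel_measurable M" "g \<in> borel_measurable M"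
    and "integrable M (\<lambda>x. (f x)\<^sup>2)" "integrable M (\<lambda>x. (g x)\<^sup>2)"
  shows "integrable M (\<lambda>x. f x * g x)"
proof (rule Bochner_Integration.integrable_bound)
  show "integrable M (\<lambda>x. (f x)\<^sup>2 + (g x)\<^sup>2)" using assms by auto
  have "\<bar>f x * g x\<bar> \<le> (f x)\<^sup>2 + (g x)\<^sup>2" for x
    using sum_squares_bound[of "\<bar>f x\<bar>" "\<bar>g x\<bar>"] abs_ge_zero[of "f x * g x"]
    unfolding abs_mult power2_abs by linarith
  then show "AE x in M. norm (f x * g x) \<le> norm ((f x)\<^sup>2 + (g x)\<^sup>2)" by simp
qed simp

lemma integrable_square_diff:
  fixes f g :: "'a \<Rightarrow> real"
  assumes "f \<in> borel_measurable M" "g \<in> borel_measurable M"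
    and "integrable M (\<lambda>x. (f x)\<^sup>2)" "integrable M (\<lambda>x. (g x)\<^sup>2)"
  shows "integrable M (\<lambda>x. (f x - g x)\<^sup>2)"
proof -
  have "integrable M (\<lambda>x. (f x)\<^sup>2 + (g x)\<^sup>2 - 2 * (f x * g x))"
    using integrable_mult_of_square_integrable[OF assms] assms by auto
  then show ?thesis by (simp add: power2_diff mult.assoc)
qed

context finite_measure_subalgebra
begin

lemma integrable_square_real_cond_exp:
  assumes "f \<in> borel_measurable M" "integrable M (\<lambda>x. (f x)\<^sup>2)"
  shows "integrable M (\<lambda>x. (real_cond_exp M F f x)\<^sup>2)"
proof -
  have "integrable M f" using square_integrable_imp_integrable assms by blast
  then show ?thesis
    by (rule integrable_convex_cond_exp[where I=UNIV and q="\<lambda>x. x\<^sup>2"])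
       (auto simp: assms convex_power2)
qed

lemma real_cond_exp_least_squares:
  assumes [measurable]: "f \<in> borel_measurable M" "g \<in> borel_measurable F"
    and f2: "integrable M (\<lambda>x. (f x)\<^sup>2)" and gf2: "integrable M (\<lambda>x. (g x - f x)\<^sup>2)"
  shows "integrable M (\<lambda>x. (real_cond_exp M F f x - f x)\<^sup>2)"
    and "(\<integral>x. (real_cond_exp M F f x - f x)\<^sup>2 \<partial>M) \<le> (\<integral>x. (g x - f x)\<^sup>2 \<partial>M)"
proof -
  define c where "c = real_cond_exp M F f"
  have c_meas [measurable]: "c \<in> borel_measurable F" "c \<in> borel_measurable M"
    unfolding c_def by auto
  have g_meas [measurable]: "g \<in> borel_measurable M"
    by (rule measurable_from_subalg[OF subalg assms(2)])
  have c2: "integrable M (\<lambda>x. (c x)\<^sup>2)"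
    unfolding c_def using integrable_square_real_cond_exp f2 by simp
  have g2: "integrable M (\<lambda>x. (g x)\<^sup>2)"
    using integrable_square_diff[of "\<lambda>x. g x - f x" M "\<lambda>x. - f x"] gf2 f2 by simp
  show cf2: "integrable M (\<lambda>x. (real_cond_exp M F f x - f x)\<^sup>2)"
    using integrable_square_diff[OF _ _ c2 f2] unfolding c_def by simp
  define d where "d x = g x - c x" for x
  have d_meas [measurable]: "d \<in> borel_measurable F" "d \<in> borel_measurable M"
    unfolding d_def by auto
  have d2: "integrable M (\<lambda>x. (d x)\<^sup>2)"
    unfolding d_def using integrable_square_diff[OF _ _ g2 c2] by simp
  have df: "integrable M (\<lambda>x. d x * f x)"
    using integrable_mult_of_square_integrable[OF _ _ d2 f2] by simp
  \<comment> \<open>\<open>g - c\<close> is \<open>F\<close>-measurable, hence orthogonal to \<open>c - f\<close>\<close>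
  have dc: "integrable M (\<lambda>x. d x * c x)" "(\<integral>x. d x * c x \<partial>M) = (\<integral>x. d x * f x \<partial>M)"
    using real_cond_exp_intg[OF df] unfolding c_def by auto
  have "(g x - f x)\<^sup>2 = (d x)\<^sup>2 + 2 * (d x * c x - d x * f x) + (c x - f x)\<^sup>2" for x
    unfolding d_def by (simp add: power2_eq_square algebra_simps)
  then have "(\<integral>x. (g x - f x)\<^sup>2 \<partial>M)
      = (\<integral>x. (d x)\<^sup>2 \<partial>M) + 2 * ((\<integral>x. d x * c x \<partial>M) - (\<integral>x. d x * f x \<partial>M)) + (\<integral>x. (c x - f x)\<^sup>2 \<partial>M)"
    using d2 df dc(1) cf2 by (simp add: c_def)
  also have "\<dots> = (\<integral>x. (d x)\<^sup>2 \<partial>M) + (\<integral>x. (c x - f x)\<^sup>2 \<partial>M)"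
    using dc(2) by simp
  also have "\<dots> \<ge> (\<integral>x. (c x - f x)\<^sup>2 \<partial>M)" by simp
  finally show "(\<integral>x. (real_cond_exp M F f x - f x)\<^sup>2 \<partial>M) \<le> (\<integral>x. (g x - f x)\<^sup>2 \<partial>M)"
    unfolding c_def .
qed

end

definition vec_cond_exp :: "'a measure \<Rightarrow> 'a measure \<Rightarrow> ('a \<Rightarrow> real^'d) \<Rightarrow> 'a \<Rightarrow> real^'d" where
  "vec_cond_exp M F Z = (\<lambda>x. \<chi> i. real_cond_exp M F (\<lambda>y. Z y $ i) x)"

lemma cond_exp_vec_eq_vec_cond_exp:
  "cond_exp_vec M X Z = vec_cond_exp M (vimage_algebra (space M) X borel) Z"
  unfolding cond_exp_vec_def vec_cond_exp_def ..

lemma borel_measurable_vec_nth [measurable (raw)]: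
  "f \<in> borel_measurable M \<Longrightarrow> (\<lambda>x. f x $ i) \<in> borel_measurable M"
  for f :: "'a \<Rightarrow> real^'n"
  using measurable_compose[OF _ borel_measurable_nth] .

lemma power2_norm_vec: "(norm x)\<^sup>2 = (\<Sum>i\<in>UNIV. (x $ i)\<^sup>2)"
  for x :: "real^'n"
  by (simp add: norm_vec_def L2_set_def sum_nonneg)

lemma integrable_norm_square_vec_iff:
  fixes V :: "'a \<Rightarrow> real^'n"
  assumes [measurable]: "V \<in> borel_measurable M"
  shows "integrable M (\<lambda>x. (norm (V x))\<^sup>2) \<longleftrightarrow> (\<forall>i. integrable M (\<lambda>x. (V x $ i)\<^sup>2))"
proof (intro iffI allI)
  fix i
  assume "integrable M (\<lambda>x. (norm (V x))\<^sup>2)"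
  then show "integrable M (\<lambda>x. (V x $ i)\<^sup>2)"
  proof (rule Bochner_Integration.integrable_bound)
    have "(V x $ i)\<^sup>2 \<le> (norm (V x))\<^sup>2" for x
      using component_le_norm_cart[of "V x" i] abs_le_square_iff[of "V x $ i" "norm (V x)"] by simp
    then show "AE x in M. norm ((V x $ i)\<^sup>2) \<le> norm ((norm (V x))\<^sup>2)" by simp
  qed measurable
next
  assume "\<forall>i. integrable M (\<lambda>x. (V x $ i)\<^sup>2)"
  then show "integrable M (\<lambda>x. (norm (V x))\<^sup>2)"
    unfolding power2_norm_vec by (intro Bochner_Integration.integrable_sum) blast
qed

context finite_measure_subalgebra
begin

lemma vec_cond_exp_least_squares:
  fixes Y W :: "'a \<Rightarrow> real^'d"
  assumes [measurable]: "Y \<in> borel_measurable M" "W \<in> borel_measurable F"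
    and Y2: "integrable M (\<lambda>x. (norm (Y x))\<^sup>2)"
    and WY2: "integrable M (\<lambda>x. (norm (W x - Y x))\<^sup>2)"
  shows "integrable M (\<lambda>x. (norm (vec_cond_exp M F Y x - Y x))\<^sup>2)"
    and "(\<integral>x. (norm (vec_cond_exp M F Y x - Y x))\<^sup>2 \<partial>M) \<le> (\<integral>x. (norm (W x - Y x))\<^sup>2 \<partial>M)"
proof -
  have "W \<in> borel_measurable M"
    by (rule measurable_from_subalg[OF subalg assms(2)])
  then have WY2_i: "integrable M (\<lambda>x. (W x $ i - Y x $ i)\<^sup>2)" for i
    using WY2 integrable_norm_square_vec_iff[of "\<lambda>x. W x - Y x" M] by simp
  have Y2_i: "integrable M (\<lambda>x. (Y x $ i)\<^sup>2)" for i
    using Y2 integrable_norm_square_vec_iff[of Y M] by simp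
  note least_squares_i = real_cond_exp_least_squares[OF _ _ Y2_i WY2_i, simplified]
  have norm_cond_exp: "(norm (vec_cond_exp M F Y x - Y x))\<^sup>2
      = (\<Sum>i\<in>UNIV. (real_cond_exp M F (\<lambda>y. Y y $ i) x - Y x $ i)\<^sup>2)" for x
    unfolding power2_norm_vec vec_cond_exp_def by simp
  show "integrable M (\<lambda>x. (norm (vec_cond_exp M F Y x - Y x))\<^sup>2)"
    unfolding norm_cond_exp using least_squares_i(1) by auto
  have "(\<integral>x. (norm (vec_cond_exp M F Y x - Y x))\<^sup>2 \<partial>M)
      = (\<Sum>i\<in>UNIV. \<integral>x. (real_cond_exp M F (\<lambda>y. Y y $ i) x - Y x $ i)\<^sup>2 \<partial>M)"
    unfolding norm_cond_exp using least_squares_i(1) by (intro Bochner_Integration.integral_sum) auto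
  also have "\<dots> \<le> (\<Sum>i\<in>UNIV. \<integral>x. (W x $ i - Y x $ i)\<^sup>2 \<partial>M)"
    using least_squares_i(2) by (intro sum_mono) auto
  also have "\<dots> = (\<integral>x. (norm (W x - Y x))\<^sup>2 \<partial>M)"
    unfolding power2_norm_vec vector_minus_component
    using WY2_i by (intro Bochner_Integration.integral_sum[symmetric]) auto
  finally show "(\<integral>x. (norm (vec_cond_exp M F Y x - Y x))\<^sup>2 \<partial>M) \<le> (\<integral>x. (norm (W x - Y x))\<^sup>2 \<partial>M)" .
qed

lemma vec_cond_exp_nested_subalg:
  fixes Z Y :: "'a \<Rightarrow> real^'d"
  assumes "subalgebra M G" "subalgebra G F"
    and [measurable]: "Z \<in> borel_measurable M" "Y \<in> borel_measurable M"
    and "integrable M Z" and ZY: "AE x in M. vec_cond_exp M G Z x = Y x"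
  shows "AE x in M. vec_cond_exp M F Z x = vec_cond_exp M F Y x"
proof -
  have "AE x in M. real_cond_exp M F (\<lambda>y. Z y $ i) x = real_cond_exp M F (\<lambda>y. Y y $ i) x" for i
  proof -
    have "AE x in M. real_cond_exp M G (\<lambda>y. Z y $ i) x = Y x $ i"
      using ZY by eventually_elim (simp add: vec_cond_exp_def vec_eq_iff)
    then have "AE x in M. real_cond_exp M F (real_cond_exp M G (\<lambda>y. Z y $ i)) x
        = real_cond_exp M F (\<lambda>y. Y y $ i) x"
      by (rule real_cond_exp_cong) (auto intro: measurable_from_subalg[OF assms(1)])
    moreover have "AE x in M. real_cond_exp M F (real_cond_exp M G (\<lambda>y. Z y $ i)) x
        = real_cond_exp M F (\<lambda>y. Z y $ i) x"
      using integrable_bounded_linear[OF bounded_linear_vec_nth \<open>integrable M Z\<close>]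
      by (intro real_cond_exp_nested_subalg assms(1,2))
    ultimately show ?thesis by auto
  qed
  then have "AE x in M. \<forall>i. real_cond_exp M F (\<lambda>y. Z y $ i) x = real_cond_exp M F (\<lambda>y. Y y $ i) x"
    by (simp add: AE_all_countable)
  then show ?thesis
    by eventually_elim (simp add: vec_cond_exp_def vec_eq_iff)
qed

end

lemma power2_norm_diff_le:
  fixes a b y :: "'a::real_normed_vector"
  shows "(norm (a - b))\<^sup>2 \<le> 2 * (norm (a - y))\<^sup>2 + 2 * (norm (b - y))\<^sup>2"
proof -
  have "norm (a - b) \<le> norm (a - y) + norm (b - y)"
    using norm_triangle_ineq4[of "a - y" "b - y"] by simp
  then have "(norm (a - b))\<^sup>2 \<le> (norm (a - y) + norm (b - y))\<^sup>2"
    by (intro power_mono) auto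
  also have "\<dots> \<le> 2 * (norm (a - y))\<^sup>2 + 2 * (norm (b - y))\<^sup>2"
    using sum_squares_bound[of "norm (a - y)" "norm (b - y)"] by (simp add: power2_sum)
  finally show ?thesis .
qed

lemma subalgebra_trans: "subalgebra M G \<Longrightarrow> subalgebra G F \<Longrightarrow> subalgebra M F"
  unfolding subalgebra_def by auto

lemma integral_norm_square_diff_vec_cond_exp_le:
  fixes Z Y V W :: "'a \<Rightarrow> real^'d"
  assumes "finite_measure M" and H: "subalgebra M H" and HF: "subalgebra H F" and HG: "subalgebra H G"
    and Z_meas [measurable]: "Z \<in> borel_measurable M" and Y_meas [measurable]: "Y \<in> borel_measurable M"
    and Z2: "integrable M (\<lambda>x. (norm (Z x))\<^sup>2)" and ZY: "AE x in M. vec_cond_exp M H Z x = Y x"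
    and "V \<in> borel_measurable F" "W \<in> borel_measurable G"
    and VY2: "integrable M (\<lambda>x. (norm (V x - Y x))\<^sup>2)"
    and WY2: "integrable M (\<lambda>x. (norm (W x - Y x))\<^sup>2)"
  shows "(\<integral>x. (norm (vec_cond_exp M F Z x - vec_cond_exp M G Z x))\<^sup>2 \<partial>M)
    \<le> 2 * (\<integral>x. (norm (V x - Y x))\<^sup>2 \<partial>M) + 2 * (\<integral>x. (norm (W x - Y x))\<^sup>2 \<partial>M)"
proof -
  interpret finite_measure M by fact
  interpret H: finite_measure_subalgebra M H by unfold_locales fact
  interpret F: finite_measure_subalgebra M F by unfold_locales (rule subalgebra_trans[OF H HF])
  interpret G: finite_measure_subalgebra M G by unfold_locales (rule subalgebra_trans[OF H HG])
  have "integrable M Z"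
    using square_integrable_imp_integrable[OF _ Z2] integrable_norm_iff[of Z M] by simp
  have "integrable M (\<lambda>x. (Y x $ i)\<^sup>2)" for i
  proof -
    have "AE x in M. (real_cond_exp M H (\<lambda>y. Z y $ i) x)\<^sup>2 = (Y x $ i)\<^sup>2"
      using ZY by eventually_elim (simp add: vec_cond_exp_def vec_eq_iff)
    moreover have "integrable M (\<lambda>x. (real_cond_exp M H (\<lambda>y. Z y $ i) x)\<^sup>2)"
      using Z2 integrable_norm_square_vec_iff[of Z M] by (intro H.integrable_square_real_cond_exp) auto
    ultimately show ?thesis
      by (subst integrable_cong_AE[symmetric]) (auto simp: borel_measurable_cond_exp2)
  qed
  then have Y2: "integrable M (\<lambda>x. (norm (Y x))\<^sup>2)"
    using integrable_norm_square_vec_iff[of Y M] by simp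
  note F_tower = F.vec_cond_exp_nested_subalg[OF H HF Z_meas Y_meas \<open>integrable M Z\<close> ZY]
  note G_tower = G.vec_cond_exp_nested_subalg[OF H HG Z_meas Y_meas \<open>integrable M Z\<close> ZY]
  note F_approx = F.vec_cond_exp_least_squares[OF Y_meas \<open>V \<in> borel_measurable F\<close> Y2 VY2]
  note G_approx = G.vec_cond_exp_least_squares[OF Y_meas \<open>W \<in> borel_measurable G\<close> Y2 WY2]
  have "(\<integral>x. (norm (vec_cond_exp M F Z x - vec_cond_exp M G Z x))\<^sup>2 \<partial>M)
      \<le> (\<integral>x. 2 * (norm (vec_cond_exp M F Y x - Y x))\<^sup>2 + 2 * (norm (vec_cond_exp M G Y x - Y x))\<^sup>2 \<partial>M)"
  proof (rule integral_mono_AE')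
    show "AE x in M. (norm (vec_cond_exp M F Z x - vec_cond_exp M G Z x))\<^sup>2
        \<le> 2 * (norm (vec_cond_exp M F Y x - Y x))\<^sup>2 + 2 * (norm (vec_cond_exp M G Y x - Y x))\<^sup>2"
      using F_tower G_tower by eventually_elim (simp add: power2_norm_diff_le)
  qed (use F_approx(1) G_approx(1) in auto)
  also have "\<dots> = 2 * (\<integral>x. (norm (vec_cond_exp M F Y x - Y x))\<^sup>2 \<partial>M)
      + 2 * (\<integral>x. (norm (vec_cond_exp M G Y x - Y x))\<^sup>2 \<partial>M)"
    using F_approx(1) G_approx(1) by simp
  also have "\<dots> \<le> 2 * (\<integral>x. (norm (V x - Y x))\<^sup>2 \<partial>M) + 2 * (\<integral>x. (norm (W x - Y x))\<^sup>2 \<partial>M)"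
    using F_approx(2) G_approx(2) by simp
  finally show ?thesis .
qed

lemma subalgebra_vimage_algebra:
  "X \<in> M \<rightarrow>\<^sub>M N \<Longrightarrow> subalgebra M (vimage_algebra (space M) X N)"
  unfolding subalgebra_def using sets_image_in_sets[of M "space M" X N] by simp

lemma subalgebra_vimage_algebra_Pair:
  fixes X :: "'a \<Rightarrow> 'b::second_countable_topology" and X' :: "'a \<Rightarrow> 'c::second_countable_topology"
  assumes "X \<in> borel_measurable M" "X' \<in> borel_measurable M"
  defines "F \<equiv> vimage_algebra (space M) (\<lambda>x. (X x, X' x)) borel"
  shows "subalgebra M F"
    and "subalgebra F (vimage_algebra (space M) X borel)"
    and "subalgebra F (vimage_algebra (space M) X' borel)"
proof -
  show "subalgebra M F"
    unfolding F_def using assms by (intro subalgebra_vimage_algebra) measurable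
  have pair: "(\<lambda>x. (X x, X' x)) \<in> F \<rightarrow>\<^sub>M borel"
    unfolding F_def by (rule measurable_vimage_algebra1) simp
  have "X \<in> F \<rightarrow>\<^sub>M borel" "X' \<in> F \<rightarrow>\<^sub>M borel"
    using measurable_compose[OF pair borel_measurable_continuous_onI[OF continuous_on_fst[OF continuous_on_id]]]
      measurable_compose[OF pair borel_measurable_continuous_onI[OF continuous_on_snd[OF continuous_on_id]]]
    by simp_all
  from this[THEN subalgebra_vimage_algebra]
  show "subalgebra F (vimage_algebra (space M) X borel)" "subalgebra F (vimage_algebra (space M) X' borel)"
    by (simp_all add: F_def)
qed

lemma dist_separately_lipschitz_le:
  assumes "\<forall>y. lipschitz_on \<alpha> UNIV (\<lambda>x. h x y)" and "\<forall>x. lipschitz_on \<beta> UNIV (\<lambda>y. h x y)"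
  shows "dist (h a b) (h c d) \<le> \<alpha> * dist a c + \<beta> * dist b d"
proof -
  have "dist (h a b) (h c d) \<le> dist (h a b) (h c b) + dist (h c b) (h c d)"
    by (rule dist_triangle)
  also have "dist (h a b) (h c b) \<le> \<alpha> * dist a c"
    using assms(1) by (auto intro: lipschitz_onD)
  also have "dist (h c b) (h c d) \<le> \<beta> * dist b d"
    using assms(2) by (auto intro: lipschitz_onD)
  finally show ?thesis by simp
qed

lemma borel_measurable_separately_lipschitz:
  fixes h :: "'b::{metric_space, second_countable_topology} \<Rightarrow> 'c::{metric_space, second_countable_topology}
    \<Rightarrow> 'd::metric_space"
  assumes lip1: "\<forall>y. lipschitz_on \<alpha> UNIV (\<lambda>x. h x y)" and lip2: "\<forall>x. lipschitz_on \<beta> UNIV (\<lambda>y. h x y)"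
    and "f \<in> borel_measurable N" "g \<in> borel_measurable N"
  shows "(\<lambda>x. h (f x) (g x)) \<in> borel_measurable N"
proof -
  have "0 \<le> \<alpha>" "0 \<le> \<beta>"
    using lip1 lip2 lipschitz_on_nonneg by blast+
  have "lipschitz_on (\<alpha> + \<beta>) UNIV (\<lambda>p. h (fst p) (snd p))"
  proof (rule lipschitz_onI)
    fix p q :: "'b \<times> 'c"
    have "dist (h (fst p) (snd p)) (h (fst q) (snd q)) \<le> \<alpha> * dist (fst p) (fst q) + \<beta> * dist (snd p) (snd q)"
      using dist_separately_lipschitz_le[OF lip1 lip2] .
    also have "\<dots> \<le> \<alpha> * dist p q + \<beta> * dist p q"
      using dist_fst_le[of p q] dist_snd_le[of p q] \<open>0 \<le> \<alpha>\<close> \<open>0 \<le> \<beta>\<close>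
      by (intro add_mono mult_left_mono) auto
    finally show "dist (h (fst p) (snd p)) (h (fst q) (snd q)) \<le> (\<alpha> + \<beta>) * dist p q"
      by (simp add: algebra_simps)
  qed (use \<open>0 \<le> \<alpha>\<close> \<open>0 \<le> \<beta>\<close> in simp)
  then have "(\<lambda>p. h (fst p) (snd p)) \<in> borel_measurable borel"
    by (intro borel_measurable_continuous_onI lipschitz_on_continuous_on)
  from measurable_compose[OF borel_measurable_Pair[OF assms(3,4)] this] show ?thesis by simp
qed

lemma integral_power2_norm_le_of_norm_le:
  fixes U :: "'a \<Rightarrow> 'b::real_normed_vector" and V :: "'a \<Rightarrow> 'c::real_normed_vector"
  assumes "U \<in> borel_measurable M" and V2: "integrable M (\<lambda>x. (norm (V x))\<^sup>2)"
    and UV: "\<And>x. norm (U x) \<le> L * norm (V x)"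
  shows "integrable M (\<lambda>x. (norm (U x))\<^sup>2)"
    and "(\<integral>x. (norm (U x))\<^sup>2 \<partial>M) \<le> L\<^sup>2 * (\<integral>x. (norm (V x))\<^sup>2 \<partial>M)"
proof -
  have UV2: "(norm (U x))\<^sup>2 \<le> L\<^sup>2 * (norm (V x))\<^sup>2" for x
    using power_mono[OF UV[of x] norm_ge_zero] by (simp add: power_mult_distrib)
  show U2: "integrable M (\<lambda>x. (norm (U x))\<^sup>2)"
    by (rule Bochner_Integration.integrable_bound[where f="\<lambda>x. L\<^sup>2 * (norm (V x))\<^sup>2"])
       (use assms UV2 in auto)
  have "(\<integral>x. (norm (U x))\<^sup>2 \<partial>M) \<le> (\<integral>x. L\<^sup>2 * (norm (V x))\<^sup>2 \<partial>M)"
    using U2 V2 UV2 by (intro integral_mono) auto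
  then show "(\<integral>x. (norm (U x))\<^sup>2 \<partial>M) \<le> L\<^sup>2 * (\<integral>x. (norm (V x))\<^sup>2 \<partial>M)" by simp
qed

lemma integral_power2_norm_diff_separately_lipschitz:
  fixes h :: "'b::{real_normed_vector, second_countable_topology} \<Rightarrow> 'b \<Rightarrow> 'c::{real_normed_vector, second_countable_topology}"
  assumes lip1: "\<forall>y. lipschitz_on \<alpha> UNIV (\<lambda>x. h x y)" and lip2: "\<forall>x. lipschitz_on \<beta> UNIV (\<lambda>y. h x y)"
    and X: "X \<in> borel_measurable M" and X': "X' \<in> borel_measurable M"
    and XX'2: "integrable M (\<lambda>x. (norm (X x - X' x))\<^sup>2)"
  shows "integrable M (\<lambda>x. (norm (h (X x) (X x) - h (X x) (X' x)))\<^sup>2)"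
    and "(\<integral>x. (norm (h (X x) (X x) - h (X x) (X' x)))\<^sup>2 \<partial>M) \<le> \<beta>\<^sup>2 * (\<integral>x. (norm (X x - X' x))\<^sup>2 \<partial>M)"
    and "integrable M (\<lambda>x. (norm (h (X' x) (X' x) - h (X x) (X' x)))\<^sup>2)"
    and "(\<integral>x. (norm (h (X' x) (X' x) - h (X x) (X' x)))\<^sup>2 \<partial>M) \<le> \<alpha>\<^sup>2 * (\<integral>x. (norm (X x - X' x))\<^sup>2 \<partial>M)"
proof -
  note h_meas = borel_measurable_separately_lipschitz[OF lip1 lip2]
  have "norm (h (X x) (X x) - h (X x) (X' x)) \<le> \<beta> * norm (X x - X' x)" for x
    using lipschitz_on_normD[of \<beta> UNIV "h (X x)" "X x" "X' x"] lip2 by simp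
  from integral_power2_norm_le_of_norm_le[OF borel_measurable_diff[OF h_meas[OF X X] h_meas[OF X X']] XX'2 this]
  show "integrable M (\<lambda>x. (norm (h (X x) (X x) - h (X x) (X' x)))\<^sup>2)"
    "(\<integral>x. (norm (h (X x) (X x) - h (X x) (X' x)))\<^sup>2 \<partial>M) \<le> \<beta>\<^sup>2 * (\<integral>x. (norm (X x - X' x))\<^sup>2 \<partial>M)" .
  have "norm (h (X' x) (X' x) - h (X x) (X' x)) \<le> \<alpha> * norm (X x - X' x)" for x
    using lipschitz_on_normD[of \<alpha> UNIV "\<lambda>y. h y (X' x)" "X' x" "X x"] lip1 by (simp add: norm_minus_commute)
  from integral_power2_norm_le_of_norm_le[OF borel_measurable_diff[OF h_meas[OF X' X'] h_meas[OF X X']] XX'2 this]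
  show "integrable M (\<lambda>x. (norm (h (X' x) (X' x) - h (X x) (X' x)))\<^sup>2)"
    "(\<integral>x. (norm (h (X' x) (X' x) - h (X x) (X' x)))\<^sup>2 \<partial>M) \<le> \<alpha>\<^sup>2 * (\<integral>x. (norm (X x - X' x))\<^sup>2 \<partial>M)" .
qed

lemma power2_norm_diff_eq_cos_dist:
  fixes x y :: "real^'m"
  assumes "norm x = 1" "norm y = 1"
  shows "(norm (x - y))\<^sup>2 = 2 * cos_dist x y"
proof -
  have "(norm (x - y))\<^sup>2 = (norm x)\<^sup>2 + (norm y)\<^sup>2 - 2 * inner x y"
    unfolding power2_norm_eq_inner by (simp add: inner_diff_left inner_diff_right inner_commute)
  then show ?thesis using assms unfolding cos_dist_def by simp
qed

lemma (in finite_measure) integral_power2_norm_diff_unit: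
  fixes X X' :: "'a \<Rightarrow> real^'m"
  assumes [measurable]: "X \<in> borel_measurable M" "X' \<in> borel_measurable M"
    and unit: "AE x in M. norm (X x) = 1" "AE x in M. norm (X' x) = 1"
  shows "integrable M (\<lambda>x. (norm (X x - X' x))\<^sup>2)"
    and "(\<integral>x. (norm (X x - X' x))\<^sup>2 \<partial>M) = 2 * (\<integral>x. cos_dist (X x) (X' x) \<partial>M)"
proof -
  have "AE x in M. norm ((norm (X x - X' x))\<^sup>2) \<le> 2\<^sup>2"
    using unit
  proof eventually_elim
    case (elim x)
    then have "norm (X x - X' x) \<le> 2"
      using norm_triangle_ineq4[of "X x" "X' x"] by simp
    then have "(norm (X x - X' x))\<^sup>2 \<le> 2\<^sup>2"
      by (intro power_mono) auto
    then show ?case by simp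
  qed
  then show "integrable M (\<lambda>x. (norm (X x - X' x))\<^sup>2)"
    by (rule integrable_const_bound) measurable
  have "AE x in M. (norm (X x - X' x))\<^sup>2 = 2 * cos_dist (X x) (X' x)"
    using unit by eventually_elim (simp add: power2_norm_diff_eq_cos_dist)
  then have "(\<integral>x. (norm (X x - X' x))\<^sup>2 \<partial>M) = (\<integral>x. 2 * cos_dist (X x) (X' x) \<partial>M)"
    by (rule integral_cong_AE[rotated 2]) (auto simp: cos_dist_def)
  then show "(\<integral>x. (norm (X x - X' x))\<^sup>2 \<partial>M) = 2 * (\<integral>x. cos_dist (X x) (X' x) \<partial>M)"
    by simp
qed

theorem theorem1:
  fixes M :: "'a measure"
    and Xl Xp :: "'a \<Rightarrow> real^'m"
    and Z :: "'a \<Rightarrow> real^'d"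
    and h :: "real^'m \<Rightarrow> real^'m \<Rightarrow> real^'d"
    and \<alpha> \<beta> \<epsilon> :: real
  assumes "prob_space M"
    and "Xl \<in> borel_measurable M" and "Xp \<in> borel_measurable M"
    and "AE \<omega> in M. norm (Xl \<omega>) = 1" and "AE \<omega> in M. norm (Xp \<omega>) = 1"
    and "Z \<in> borel_measurable M" and "integrable M (\<lambda>\<omega>. (norm (Z \<omega>))\<^sup>2)"
    and "\<epsilon> > 0"
    and "(\<integral>\<omega>. cos_dist (Xl \<omega>) (Xp \<omega>) \<partial>M) < \<epsilon> / 2"
    and "AE \<omega> in M. cond_exp_vec M (\<lambda>\<omega>'. (Xl \<omega>', Xp \<omega>')) Z \<omega> = h (Xl \<omega>) (Xp \<omega>)"
    and "\<alpha> > 0" and "\<beta> > 0"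
    and "\<forall>y. lipschitz_on \<alpha> UNIV (\<lambda>x. h x y)"
    and "\<forall>x. lipschitz_on \<beta> UNIV (\<lambda>y. h x y)"
  shows "(\<integral>\<omega>. (norm (cond_exp_vec M Xl Z \<omega> - cond_exp_vec M Xp Z \<omega>))\<^sup>2 \<partial>M)
           < 2 * (\<alpha>\<^sup>2 + \<beta>\<^sup>2) * \<epsilon>"
proof -
  interpret prob_space M by fact
  note h_meas = borel_measurable_separately_lipschitz[OF assms(13,14)]
  note diff_unit = integral_power2_norm_diff_unit[OF assms(2-5)]
  note lip = integral_power2_norm_diff_separately_lipschitz[OF assms(13,14,2,3) diff_unit(1)]
  have "Xl \<in> vimage_algebra (space M) Xl borel \<rightarrow>\<^sub>M borel" "Xp \<in> vimage_algebra (space M) Xp borel \<rightarrow>\<^sub>M borel"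
    by (rule measurable_vimage_algebra1, simp)+
  then have "(\<lambda>\<omega>. h (Xl \<omega>) (Xl \<omega>)) \<in> borel_measurable (vimage_algebra (space M) Xl borel)"
    "(\<lambda>\<omega>. h (Xp \<omega>) (Xp \<omega>)) \<in> borel_measurable (vimage_algebra (space M) Xp borel)"
    using h_meas by blast+
  note approx = integral_norm_square_diff_vec_cond_exp_le[OF finite_measure_axioms
      subalgebra_vimage_algebra_Pair[OF assms(2,3)] assms(6) h_meas[OF assms(2,3)] assms(7)
      assms(10)[unfolded cond_exp_vec_eq_vec_cond_exp] this lip(1,3)]
  have "(\<integral>\<omega>. (norm (cond_exp_vec M Xl Z \<omega> - cond_exp_vec M Xp Z \<omega>))\<^sup>2 \<partial>M)
      \<le> 2 * (\<beta>\<^sup>2 * (\<integral>\<omega>. (norm (Xl \<omega> - Xp \<omega>))\<^sup>2 \<partial>M)) + 2 * (\<alpha>\<^sup>2 * (\<integral>\<omega>. (norm (Xl \<omega> - Xp \<omega>))\<^sup>2 \<partial>M))"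
    using approx lip(2,4) unfolding cond_exp_vec_eq_vec_cond_exp by linarith
  also have "\<dots> = 2 * (\<alpha>\<^sup>2 + \<beta>\<^sup>2) * (2 * (\<integral>\<omega>. cos_dist (Xl \<omega>) (Xp \<omega>) \<partial>M))"
    unfolding diff_unit(2) by (simp add: algebra_simps)
  also have "\<dots> < 2 * (\<alpha>\<^sup>2 + \<beta>\<^sup>2) * \<epsilon>"
    using assms(9) \<open>\<alpha> > 0\<close> by (intro mult_strict_left_mono) (auto intro: add_pos_nonneg)
  finally show ?thesis .
qed

end
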